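(* Let $n\ge 1$ and define $A_n^{(\mathsf{cyc}^*-\mathsf{fix}^*,\mathsf{exc})}(q,t)=\sum_{\sigma\in\mathfrak{S}_n}q^{(\mathsf{cyc}^*-\mathsf{fix}^* )\sigma}t^{\mathsf{exc}\,\sigma}$. Then $$A_{n}^{(\mathsf{cyc}^*-\mathsf{fix}^*, \mathsf{exc})}(q, t)=\left(\frac{1+xt}{1+x}\right)^{n-1}P^{(\mathsf{cyc}^*-\mathsf{fix}^*, \mathsf{cpk}^*,\mathsf{exc})}\left(\mathfrak{S}_n; q, \frac{(1+x)^{2}t}{(x+t)(1+xt)},\frac{x+t}{1+xt}\right),$$ equivalently, $$P^{(\mathsf{cyc}^*-\mathsf{fix}^*, \mathsf{cpk}^*,\mathsf{exc})}(\mathfrak{S}_n; q, x,t)=\left(\frac{1+u}{1+uv}\right)^{n-1}A_{n}^{(\mathsf{cyc}^*-\mathsf{fix}^*,\mathsf{exc})}(q, v),$$ where $u=\frac{1+t^{2}-2xt-(1-t)\sqrt{(1+t)^{2}-4xt}}{2(1-x)t}$ and $v=\frac{(1+t)^{2}-2xt-(1+t)\sqrt{(1+t)^{2}-4xt}}{2xt}$.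
   Context: $\mathfrak{S}_n$ is the set of permutations of $[n]$. $P^{(\mathsf{stat}_1,\ldots,\mathsf{stat}_m)}(\Omega;t_1,\ldots,t_m)=\sum_{\sigma\in\Omega}\prod_j t_j^{\mathsf{stat}_j\sigma}$. For $\sigma\in\mathfrak{S}_n$, $\mathsf{exc}\,\sigma=\#\{i:\sigma(i)>i\}$. The star companion $\sigma^*$ is the permutation of $\{0,\dots,n\}$ with $\sigma^*(0)=n$, $\sigma^*(i)=\sigma(i)-1$ for $i\in[n]$. $\mathsf{cyc}^*\sigma$ is the number of cycles of $\sigma^*$; $\mathsf{fix}^*\sigma=\#\{i\in[n-1]:\sigma^*(i)=i\}$; $\mathsf{cpk}^*\sigma=\#\{i\in[n-1]:(\sigma^* )^{-1}(i)<i>\sigma^*(i)\}$. *)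

theory Defs
  imports Complex_Main "HOL-Combinatorics.Permutations"
begin

definition perms :: "nat \<Rightarrow> (nat \<Rightarrow> nat) set" where
  "perms n = {\<sigma>. \<sigma> permutes {1..n}}"

definition star :: "nat \<Rightarrow> (nat \<Rightarrow> nat) \<Rightarrow> nat \<Rightarrow> nat" where
  "star n \<sigma> i = (if i = 0 then n else if i \<le> n then \<sigma> i - 1 else i)"

definition orbit_set :: "(nat \<Rightarrow> nat) \<Rightarrow> nat \<Rightarrow> nat set" where
  "orbit_set f x = {(f ^^ k) x | k. True}"

definition num_cycles :: "(nat \<Rightarrow> nat) \<Rightarrow> nat set \<Rightarrow> nat" where
  "num_cycles f S = card (orbit_set f ` S)"

definition exc :: "nat \<Rightarrow> (nat \<Rightarrow> nat) \<Rightarrow> nat" where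
  "exc n \<sigma> = card {i \<in> {1..n}. \<sigma> i > i}"

definition cyc_star :: "nat \<Rightarrow> (nat \<Rightarrow> nat) \<Rightarrow> nat" where
  "cyc_star n \<sigma> = num_cycles (star n \<sigma>) {0..n}"

definition fix_star :: "nat \<Rightarrow> (nat \<Rightarrow> nat) \<Rightarrow> nat" where
  "fix_star n \<sigma> = card {i \<in> {1..n-1}. star n \<sigma> i = i}"

definition cpk_star :: "nat \<Rightarrow> (nat \<Rightarrow> nat) \<Rightarrow> nat" where
  "cpk_star n \<sigma> = card {i \<in> {1..n-1}.
      inv (star n \<sigma>) i < i \<and> i > star n \<sigma> i}"

definition A_poly :: "nat \<Rightarrow> real \<Rightarrow> real \<Rightarrow> real" where
  "A_poly n q t = (\<Sum>\<sigma>\<in>perms n. q ^ (cyc_star n \<sigma> - fix_star n \<sigma>) * t ^ exc n \<sigma>)"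

definition P_poly :: "nat \<Rightarrow> real \<Rightarrow> real \<Rightarrow> real \<Rightarrow> real" where
  "P_poly n q x t = (\<Sum>\<sigma>\<in>perms n.
      q ^ (cyc_star n \<sigma> - fix_star n \<sigma>) * x ^ cpk_star n \<sigma> * t ^ exc n \<sigma>)"

end

(*
  Cut n out of the cycle of the star companion: r = reduced_star n sigma is a permutation of
  {0..<n}, and sigma* is recovered from r by inserting n right before r(0). Then cyc* - fix*,
  cpk* and exc are read off r: the last two from the cyclic type (peak, valley, double ascent,
  double descent, fixed point) of each i in [n-1], a predecessor 0 counting as n.

  Weighting each type c by w(c), the generating function G(w) = sum_r q^(cyc - fix) prod_i w(type i)
  satisfies a recursion obtained by inserting n into the cycles of a permutation of {0..<n}. An
  insertion changes the type of at most one old point, so the new terms are partial derivatives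
  of G in the weights. This makes G, by induction, a polynomial in w(Pk) w(Va), w(DA) + w(DD) and
  w(DD) + w(Fx) (polynomial, not just a function of these, since the induction differentiates it).

  The theorem compares the weights (y, s, s, 1, s) (in the order Pk, Va, DA, DD, Fx) of
  P(q, y, s) with c times the weights (1, t, t, 1, t) of A(q, t), c = (1+x)/(1+xt): the three
  invariants agree, and G is homogeneous of degree n-1.
*)
theory Submission
  imports Defs "HOL-Combinatorics.Orbits"
begin

lemma orbit_set_eq_orbit: "permutation f \<Longrightarrow> orbit_set f x = orbit f x"
  by (simp add: orbit_set_def orbit_altdef_permutation)

lemma num_cycles_eq_card_orbits: "permutation f \<Longrightarrow> num_cycles f S = card (orbit f ` S)"
  by (simp add: num_cycles_def orbit_set_eq_orbit)

lemma orbit_eq_if_in_orbit: "permutation f \<Longrightarrow> y \<in> orbit f x \<Longrightarrow> orbit f y = orbit f x"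
  by (metis cyclic_on_orbit' orbit_cyclic_eq3)

lemma orbit_subset_if_closed:
  assumes "x \<in> Z" and "\<And>y. y \<in> Z \<Longrightarrow> f y \<in> Z"
  shows "orbit f x \<subseteq> Z"
proof
  fix y assume "y \<in> orbit f x"
  then show "y \<in> Z" by induction (use assms in auto)
qed

lemma num_cycles_insert_fixpoint:
  assumes r: "r permutes S" and "finite S" and "a \<notin> S"
  shows "num_cycles r (insert a S) = num_cycles r S + 1"
proof -
  have perm: "permutation r" using r \<open>finite S\<close> permutation_permutes by blast
  have "orbit r a = {a}" using permutes_not_in[OF r \<open>a \<notin> S\<close>] orbit_eq_singleton_iff by metis
  moreover have "{a} \<notin> orbit r ` S" using permutes_orbit_subset[OF r] \<open>a \<notin> S\<close> by blast
  ultimately show ?thesis using \<open>finite S\<close> by (simp add: num_cycles_eq_card_orbits[OF perm])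
qed

lemma transpose_comp_apply:
  assumes r: "r permutes S" and "a \<notin> S" and "b \<in> S"
  shows "(transpose a b \<circ> r) i = (if i = inv r b then a else if i = a then b else r i)"
proof -
  have "r i \<noteq> a" if "i \<noteq> a"
    using that permutes_in_image[OF r] permutes_not_in[OF r] \<open>a \<notin> S\<close> by metis
  moreover have "r i \<noteq> b" if "i \<noteq> inv r b" using that permutes_inverses[OF r] by metis
  ultimately show ?thesis
    using permutes_not_in[OF r \<open>a \<notin> S\<close>] permutes_inverses[OF r] by (auto simp: transpose_def)
qed

text \<open>\<open>transpose a b \<circ> r\<close> is \<open>r\<close> with the new point \<open>a\<close> inserted into the cycle of \<open>b\<close>,
  right before \<open>b\<close>.\<close>
lemma orbit_insert_transpose:
  assumes r: "r permutes S" and "finite S" and "a \<notin> S" and "b \<in> S" and "x \<in> S"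
  shows "orbit (transpose a b \<circ> r) x = orbit r x \<union> (if inv r b \<in> orbit r x then {a} else {})"
proof -
  define g where "g = transpose a b \<circ> r"
  define p where "p = inv r b"
  have g: "g i = (if i = p then a else if i = a then b else r i)" for i
    unfolding g_def p_def using transpose_comp_apply[OF r \<open>a \<notin> S\<close> \<open>b \<in> S\<close>] .
  have "r p = b" by (simp add: p_def permutes_inverses[OF r])
  have perm_r: "permutation r" using r \<open>finite S\<close> permutation_permutes by blast
  have perm_g: "permutation g"
    unfolding g_def by (intro permutation_compose permutation_swap_id perm_r)
  have "orbit r x \<subseteq> S" using permutes_orbit_subset[OF r \<open>x \<in> S\<close>] .
  have "orbit r x \<subseteq> orbit g x \<inter> S"
  proof (rule orbit_subset_if_closed)
    show "x \<in> orbit g x \<inter> S" using permutation_self_in_orbit[OF perm_g] \<open>x \<in> S\<close> by simp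
  next
    fix y assume y: "y \<in> orbit g x \<inter> S"
    then have "y \<noteq> a" using \<open>a \<notin> S\<close> by blast
    have "r y = (if y = p then g (g y) else g y)" using \<open>r p = b\<close> \<open>y \<noteq> a\<close> by (auto simp: g)
    then have "r y \<in> orbit g x" using y by (auto intro: orbit.step)
    then show "r y \<in> orbit g x \<inter> S" using y permutes_in_image[OF r] by simp
  qed
  moreover have "a \<in> orbit g x" if "p \<in> orbit r x"
    using calculation that orbit.step[of p g x] by (auto simp: g)
  moreover have "orbit g x \<subseteq> orbit r x \<union> (if p \<in> orbit r x then {a} else {})"
  proof (rule orbit_subset_if_closed)
    show "x \<in> orbit r x \<union> (if p \<in> orbit r x then {a} else {})"
      using permutation_self_in_orbit[OF perm_r] by simp
  next
    fix y assume y: "y \<in> orbit r x \<union> (if p \<in> orbit r x then {a} else {})"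
    show "g y \<in> orbit r x \<union> (if p \<in> orbit r x then {a} else {})"
    proof (cases "y \<in> orbit r x")
      case True
      then have "y \<noteq> a" using \<open>orbit r x \<subseteq> S\<close> \<open>a \<notin> S\<close> by blast
      then show ?thesis using True by (auto simp: g orbit.step)
    next
      case False
      then show ?thesis using y \<open>r p = b\<close> by (auto simp: g orbit.step split: if_splits)
    qed
  qed
  ultimately show ?thesis by (auto simp: g_def p_def)
qed

lemma num_cycles_insert_transpose:
  assumes r: "r permutes S" and "finite S" and "a \<notin> S" and "b \<in> S"
  shows "num_cycles (transpose a b \<circ> r) (insert a S) = num_cycles r S"
proof -
  define g where "g = transpose a b \<circ> r"
  define h where "h Z = Z \<union> (if inv r b \<in> Z then {a} else {})" for Z
  have perm_r: "permutation r" using r \<open>finite S\<close> permutation_permutes by blast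
  have perm_g: "permutation g"
    unfolding g_def by (intro permutation_compose permutation_swap_id perm_r)
  have "inv r b \<in> S" using permutes_in_image[OF permutes_inv[OF r]] \<open>b \<in> S\<close> by simp
  have "g (inv r b) = a" using transpose_comp_apply[OF r \<open>a \<notin> S\<close> \<open>b \<in> S\<close>] by (simp add: g_def)
  then have "a \<in> orbit g (inv r b)" using orbit.base[of g "inv r b"] by simp
  then have "orbit g a = orbit g (inv r b)" by (rule orbit_eq_if_in_orbit[OF perm_g])
  then have "orbit g ` insert a S = orbit g ` S"
    using \<open>inv r b \<in> S\<close> by (simp add: insert_absorb rev_image_eqI)
  also have "\<dots> = h ` orbit r ` S"
    unfolding image_image g_def h_def using orbit_insert_transpose[OF assms]
    by (intro image_cong) auto
  finally have "orbit g ` insert a S = h ` orbit r ` S" .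
  moreover have "inj_on h (orbit r ` S)"
  proof (rule inj_on_inverseI)
    fix Z assume "Z \<in> orbit r ` S"
    then show "h Z - {a} = Z" using permutes_orbit_subset[OF r] \<open>a \<notin> S\<close> by (auto simp: h_def)
  qed
  ultimately show ?thesis
    by (simp add: num_cycles_eq_card_orbits perm_g perm_r card_image flip: g_def)
qed

datatype ctype = Peak | Valley | DAsc | DDes | Fixed

text \<open>A predecessor \<open>0\<close> counts as larger than \<open>i\<close>: when \<open>r\<close> is \<open>\<sigma>\<^sup>*\<close> with \<open>n\<close> cut out
  of its cycle (\<open>reduced_star\<close> below), the predecessor of \<open>i\<close> is \<open>0\<close> in \<open>r\<close> exactly
  when it is \<open>n\<close> in \<open>\<sigma>\<^sup>*\<close>.\<close>
definition ctype_of :: "(nat \<Rightarrow> nat) \<Rightarrow> nat \<Rightarrow> ctype" where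
  "ctype_of r i =
    (if r i = i then Fixed
     else if r i < i then (if 0 < inv r i \<and> inv r i < i then Peak else DDes)
     else if 0 < inv r i \<and> inv r i < i then DAsc else Valley)"

definition cweight :: "(ctype \<Rightarrow> real) \<Rightarrow> nat \<Rightarrow> (nat \<Rightarrow> nat) \<Rightarrow> real" where
  "cweight w n r = (\<Prod>i\<in>{1..<n}. w (ctype_of r i))"

definition cweight_except :: "(ctype \<Rightarrow> real) \<Rightarrow> nat \<Rightarrow> (nat \<Rightarrow> nat) \<Rightarrow> nat \<Rightarrow> real" where
  "cweight_except w n r k = (\<Prod>i\<in>{1..<n} - {k}. w (ctype_of r i))"

lemma cweight_Suc: "1 \<le> n \<Longrightarrow> cweight w (Suc n) g = w (ctype_of g n) * cweight w n g"
  by (simp add: cweight_def atLeastLessThanSuc)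

lemma cweight_cong:
  "(\<And>i. i \<in> {1..<n} \<Longrightarrow> ctype_of g i = ctype_of r i) \<Longrightarrow> cweight w n g = cweight w n r"
  unfolding cweight_def by (intro prod.cong) simp_all

lemma cweight_Suc_fixed_top:
  assumes "r permutes {..<n}" and "1 \<le> n"
  shows "cweight w (Suc n) r = w Fixed * cweight w n r"
  using assms permutes_not_in[OF assms(1)] by (simp add: cweight_Suc ctype_of_def)

lemma cweight_Suc_change_one:
  assumes "k \<in> {1..<n}" and "\<And>i. i \<in> {1..<n} - {k} \<Longrightarrow> ctype_of g i = ctype_of r i"
  shows "cweight w (Suc n) g = w (ctype_of g n) * w (ctype_of g k) * cweight_except w n r k"
proof -
  have "cweight w n g = w (ctype_of g k) * cweight_except w n g k"
    using assms(1) by (simp add: cweight_def cweight_except_def prod.remove)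
  also have "cweight_except w n g k = cweight_except w n r k"
    unfolding cweight_except_def using assms(2) by (intro prod.cong) simp_all
  finally show ?thesis using assms(1) by (simp add: cweight_Suc)
qed

context
  fixes r :: "nat \<Rightarrow> nat" and n b :: nat
  assumes r: "r permutes {..<n}" and b: "b < n"
begin

lemma transpose_insert_apply:
  "transpose n b (r i) = (if i = inv r b then n else if i = n then b else r i)"
  using transpose_comp_apply[OF r _ ] b by simp

lemma inv_transpose_insert_apply:
  "inv (transpose n b \<circ> r) j = (if j = n then inv r b else if j = b then n else inv r j)"
proof -
  have "inv (transpose n b \<circ> r) = inv r \<circ> transpose n b"
    by (simp add: o_inv_distrib permutes_bij[OF r])
  moreover have "inv r n = n" using permutes_not_in[OF permutes_inv[OF r]] by simp
  ultimately show ?thesis by (simp add: transpose_def)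
qed

lemma inv_lt_bound: "inv r b < n"
  using permutes_in_image[OF permutes_inv[OF r]] b by simp

lemma ctype_insert_other:
  assumes "i \<noteq> inv r b" "i \<noteq> b" "i \<noteq> n"
  shows "ctype_of (transpose n b \<circ> r) i = ctype_of r i"
  using assms by (simp add: ctype_of_def transpose_insert_apply inv_transpose_insert_apply)

lemma ctype_insert_top:
  "ctype_of (transpose n b \<circ> r) n = (if inv r b = 0 then DDes else Peak)"
  using b inv_lt_bound
  by (simp add: ctype_of_def transpose_insert_apply inv_transpose_insert_apply)

lemma ctype_insert_pred:
  assumes "inv r b \<noteq> b" "0 < inv r b"
  shows "ctype_of (transpose n b \<circ> r) (inv r b) =
    (case ctype_of r (inv r b) of Peak \<Rightarrow> DAsc | DDes \<Rightarrow> Valley | c \<Rightarrow> c)"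
  using assms inv_lt_bound permutes_inverses(1)[OF r]
  by (auto simp: ctype_of_def transpose_insert_apply inv_transpose_insert_apply)

lemma ctype_insert_succ:
  assumes "inv r b \<noteq> b" "0 < b"
  shows "ctype_of (transpose n b \<circ> r) b =
    (case ctype_of r b of Peak \<Rightarrow> DDes | DAsc \<Rightarrow> Valley | c \<Rightarrow> c)"
proof -
  have "r b \<noteq> b" using assms(1) permutes_inv_eq[OF r] by metis
  moreover have "r b < n" using permutes_in_image[OF r] b by simp
  ultimately show ?thesis
    using assms b by (auto simp: ctype_of_def transpose_insert_apply inv_transpose_insert_apply)
qed

lemma ctype_insert_fixed:
  assumes "inv r b = b" "0 < b"
  shows "ctype_of (transpose n b \<circ> r) b = Valley"
  using assms b by (simp add: ctype_of_def transpose_insert_apply inv_transpose_insert_apply)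

end

definition cyc_minus_fix :: "nat \<Rightarrow> (nat \<Rightarrow> nat) \<Rightarrow> nat" where
  "cyc_minus_fix n r = num_cycles r {..<n} - card {i \<in> {1..<n}. r i = i}"

definition cyc_term :: "real \<Rightarrow> (ctype \<Rightarrow> real) \<Rightarrow> nat \<Rightarrow> (nat \<Rightarrow> nat) \<Rightarrow> real" where
  "cyc_term q w n r = q ^ cyc_minus_fix n r * cweight w n r"

lemma card_fixpoints_le_num_cycles:
  assumes r: "r permutes {..<n}"
  shows "card {i \<in> {1..<n}. r i = i} \<le> num_cycles r {..<n}"
proof -
  have "orbit r i = {i}" if "r i = i" for i using that orbit_eq_singleton_iff by metis
  then have "inj_on (orbit r) {i \<in> {1..<n}. r i = i}" by (intro inj_onI) auto
  then have "card {i \<in> {1..<n}. r i = i} \<le> card (orbit r ` {..<n})"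
    by (rule card_inj_on_le) auto
  then show ?thesis
    using permutation_permutes r by (metis finite_lessThan num_cycles_eq_card_orbits)
qed

lemma cyc_minus_fix_Suc_fixed_top:
  assumes r: "r permutes {..<n}" and "1 \<le> n"
  shows "cyc_minus_fix (Suc n) r = cyc_minus_fix n r"
proof -
  have "{i \<in> {1..<Suc n}. r i = i} = insert n {i \<in> {1..<n}. r i = i}"
    using \<open>1 \<le> n\<close> permutes_not_in[OF r] by auto
  moreover have "num_cycles r {..<Suc n} = num_cycles r {..<n} + 1"
    using num_cycles_insert_fixpoint[OF r] by (simp add: lessThan_Suc)
  ultimately show ?thesis by (simp add: cyc_minus_fix_def)
qed

lemma cyc_minus_fix_insert:
  assumes r: "r permutes {..<n}" and b: "b < n"
  shows "cyc_minus_fix (Suc n) (transpose n b \<circ> r) =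
    cyc_minus_fix n r + (if inv r b = b \<and> 0 < b then 1 else 0)"
proof -
  define F where "F = {i \<in> {1..<n}. r i = i}"
  have "{i \<in> {1..<Suc n}. (transpose n b \<circ> r) i = i} = F - {inv r b}"
    using b inv_lt_bound[OF r b] permutes_inverses(1)[OF r]
    by (auto simp: F_def transpose_insert_apply[OF r b])
  moreover have "num_cycles (transpose n b \<circ> r) {..<Suc n} = num_cycles r {..<n}"
    using num_cycles_insert_transpose[OF r finite_lessThan, of n b] b by (simp add: lessThan_Suc)
  ultimately have "cyc_minus_fix (Suc n) (transpose n b \<circ> r) =
      num_cycles r {..<n} - card (F - {inv r b})"
    unfolding cyc_minus_fix_def by simp
  moreover have "cyc_minus_fix n r = num_cycles r {..<n} - card F"
    by (simp add: cyc_minus_fix_def F_def)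
  moreover have "inv r b \<in> F \<longleftrightarrow> inv r b = b \<and> 0 < b"
    using b permutes_inverses(1)[OF r] by (auto simp: F_def)
  moreover have "card F \<le> num_cycles r {..<n}"
    unfolding F_def by (rule card_fixpoints_le_num_cycles[OF r])
  moreover have "card (F - {inv r b}) = card F - 1" "card F \<ge> 1" if "inv r b \<in> F"
    using that by (auto simp: card_Diff_singleton F_def Suc_le_eq card_gt_0_iff)
  ultimately show ?thesis by auto
qed

context
  fixes r :: "nat \<Rightarrow> nat" and n :: nat
  assumes r: "r permutes {..<n}"
begin

lemma cyc_term_insert_after_zero:
  assumes "b < n" "inv r b = 0"
  shows "cyc_term q w (Suc n) (transpose n b \<circ> r) = w DDes * cyc_term q w n r"
proof -
  have "ctype_of (transpose n b \<circ> r) i = ctype_of r i" if "i \<in> {1..<n}" for i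
  proof (cases "i = b")
    case True
    have "r b \<noteq> b" using assms(2) that True permutes_inv_eq[OF r, of b b] by auto
    then have "ctype_of r b \<in> {DDes, Valley}"
      using assms permutes_inv_eq[OF r, of b b] by (auto simp: ctype_of_def)
    then show ?thesis
      using that True assms ctype_insert_succ[OF r \<open>b < n\<close>] by auto
  qed (use that assms ctype_insert_other[OF r \<open>b < n\<close>] in auto)
  then have "cweight w n (transpose n b \<circ> r) = cweight w n r" by (rule cweight_cong)
  then have "cweight w (Suc n) (transpose n b \<circ> r) = w DDes * cweight w n r"
    using assms ctype_insert_top[OF r \<open>b < n\<close>] by (simp add: cweight_Suc)
  then show ?thesis
    using assms cyc_minus_fix_insert[OF r \<open>b < n\<close>] by (simp add: cyc_term_def)
qed

lemma cyc_term_insert_top: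
  assumes "1 \<le> n"
  shows "cyc_term q w (Suc n) (transpose n n \<circ> r) = w Fixed * cyc_term q w n r"
  using assms cyc_minus_fix_Suc_fixed_top[OF r] cweight_Suc_fixed_top[OF r]
  by (simp add: cyc_term_def)

lemma cyc_term_insert_after_descent:
  assumes "b < n" "0 < inv r b" "b < inv r b"
  shows "cyc_term q w (Suc n) (transpose n b \<circ> r) = q ^ cyc_minus_fix n r *
    (w Peak * w (case ctype_of r (inv r b) of Peak \<Rightarrow> DAsc | DDes \<Rightarrow> Valley | c \<Rightarrow> c) *
     cweight_except w n r (inv r b))"
proof -
  have "ctype_of (transpose n b \<circ> r) i = ctype_of r i" if "i \<in> {1..<n} - {inv r b}" for i
  proof (cases "i = b")
    case True
    then have "ctype_of r b \<in> {DDes, Valley}"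
      using assms permutes_inv_eq[OF r, of b b] by (auto simp: ctype_of_def)
    then show ?thesis using True that assms ctype_insert_succ[OF r \<open>b < n\<close>] by auto
  qed (use that ctype_insert_other[OF r \<open>b < n\<close>] in auto)
  then have "cweight w (Suc n) (transpose n b \<circ> r) = w Peak *
      w (case ctype_of r (inv r b) of Peak \<Rightarrow> DAsc | DDes \<Rightarrow> Valley | c \<Rightarrow> c) *
      cweight_except w n r (inv r b)"
    using assms inv_lt_bound[OF r] ctype_insert_top[OF r] ctype_insert_pred[OF r]
    by (subst cweight_Suc_change_one[of "inv r b"]) auto
  then show ?thesis using assms cyc_minus_fix_insert[OF r \<open>b < n\<close>] by (simp add: cyc_term_def)
qed

lemma cyc_term_insert_before_ascent:
  assumes "b < n" "0 < inv r b" "inv r b < b"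
  shows "cyc_term q w (Suc n) (transpose n b \<circ> r) = q ^ cyc_minus_fix n r *
    (w Peak * w (case ctype_of r b of Peak \<Rightarrow> DDes | DAsc \<Rightarrow> Valley | c \<Rightarrow> c) *
     cweight_except w n r b)"
proof -
  have "ctype_of (transpose n b \<circ> r) i = ctype_of r i" if "i \<in> {1..<n} - {b}" for i
  proof (cases "i = inv r b")
    case True
    then have "ctype_of r i \<in> {DAsc, Valley}"
      using assms permutes_inverses(1)[OF r] by (auto simp: ctype_of_def)
    then show ?thesis using True that assms ctype_insert_pred[OF r \<open>b < n\<close>] by auto
  qed (use that ctype_insert_other[OF r \<open>b < n\<close>] in auto)
  then have "cweight w (Suc n) (transpose n b \<circ> r) = w Peak *
      w (case ctype_of r b of Peak \<Rightarrow> DDes | DAsc \<Rightarrow> Valley | c \<Rightarrow> c) * cweight_except w n r b"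
    using assms ctype_insert_top[OF r] ctype_insert_succ[OF r]
    by (subst cweight_Suc_change_one[of b]) auto
  then show ?thesis using assms cyc_minus_fix_insert[OF r \<open>b < n\<close>] by (simp add: cyc_term_def)
qed

lemma cyc_term_insert_fixed:
  assumes "b < n" "0 < b" "inv r b = b"
  shows "cyc_term q w (Suc n) (transpose n b \<circ> r) =
    q ^ Suc (cyc_minus_fix n r) * (w Peak * w Valley * cweight_except w n r b)"
proof -
  have "cweight w (Suc n) (transpose n b \<circ> r) = w Peak * w Valley * cweight_except w n r b"
    using assms ctype_insert_top[OF r] ctype_insert_fixed[OF r] ctype_insert_other[OF r]
    by (subst cweight_Suc_change_one[of b]) auto
  then show ?thesis using assms cyc_minus_fix_insert[OF r \<open>b < n\<close>] by (simp add: cyc_term_def)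
qed

end

definition insertion_coeff :: "real \<Rightarrow> (ctype \<Rightarrow> real) \<Rightarrow> ctype \<Rightarrow> real" where
  "insertion_coeff q w c = (case c of
      Peak \<Rightarrow> w Peak * (w DAsc + w DDes)
    | Valley \<Rightarrow> 0
    | DAsc \<Rightarrow> w Peak * w Valley
    | DDes \<Rightarrow> w Peak * w Valley
    | Fixed \<Rightarrow> q * w Peak * w Valley)"

context
  fixes r :: "nat \<Rightarrow> nat" and n :: nat
  assumes r: "r permutes {..<n}"
begin

text \<open>The two summands insert \<open>n\<close> into the cycle of \<open>k\<close> right after \<open>k\<close> (if \<open>k\<close> is
  followed by a smaller point) and right before \<open>k\<close> (if \<open>k\<close> is preceded by a smaller non-zero
  point or by itself). Either insertion changes only the type of \<open>k\<close> and makes \<open>n\<close> a peak.\<close>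
lemma cyc_term_insert_next_to:
  assumes k: "k \<in> {1..<n}"
  shows "(if r k < k then cyc_term q w (Suc n) (transpose n (r k) \<circ> r) else 0) +
    (if 0 < inv r k \<and> inv r k \<le> k then cyc_term q w (Suc n) (transpose n k \<circ> r) else 0) =
    q ^ cyc_minus_fix n r * insertion_coeff q w (ctype_of r k) * cweight_except w n r k"
proof -
  have rk: "r k < n" "inv r (r k) = k"
    using k permutes_in_image[OF r] permutes_inverses[OF r] by auto
  have "inv r k = k \<longleftrightarrow> r k = k" by (rule permutes_inv_eq[OF r])
  then show ?thesis
    using k rk cyc_term_insert_after_descent[OF r, of "r k" q w]
      cyc_term_insert_before_ascent[OF r, of k q w] cyc_term_insert_fixed[OF r, of k q w]
    by (cases "ctype_of r k")
      (auto simp: insertion_coeff_def ctype_of_def algebra_simps split: if_splits)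
qed

lemma sum_cyc_term_insert:
  assumes "1 \<le> n"
  shows "(\<Sum>b\<in>{..n}. cyc_term q w (Suc n) (transpose n b \<circ> r)) =
    (w Fixed + w DDes) * cyc_term q w n r + q ^ cyc_minus_fix n r *
      (\<Sum>k\<in>{1..<n}. insertion_coeff q w (ctype_of r k) * cweight_except w n r k)"
proof -
  define F where "F b = cyc_term q w (Suc n) (transpose n b \<circ> r)" for b
  have r0: "r 0 < n" using assms permutes_in_image[OF r] by simp
  have split_0: "(\<Sum>b<n. g b) = g 0 + (\<Sum>k\<in>{1..<n}. g k)" for g :: "nat \<Rightarrow> real"
    using assms by (simp add: lessThan_atLeast0 sum.atLeast_Suc_lessThan)
  have "(\<Sum>b<n. F b) = (\<Sum>b<n. if b = r 0 then F b else 0) +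
      (\<Sum>b<n. if b < inv r b then F b else 0) + (\<Sum>b<n. if 0 < inv r b \<and> inv r b \<le> b then F b else 0)"
    unfolding sum.distrib[symmetric] using permutes_inv_eq[OF r]
    by (intro sum.cong) (auto simp: permutes_inverses[OF r])
  also have "(\<Sum>b<n. if b = r 0 then F b else 0) = F (r 0)"
    using r0 by simp
  also have "(\<Sum>b<n. if b < inv r b then F b else 0) = (\<Sum>k<n. if r k < k then F (r k) else 0)"
    by (subst sum.permute[OF r]) (simp add: permutes_inverses[OF r])
  finally have "(\<Sum>b<n. F b) = F (r 0) + (\<Sum>k\<in>{1..<n}. (if r k < k then F (r k) else 0) +
      (if 0 < inv r k \<and> inv r k \<le> k then F k else 0))"
    by (simp add: split_0 sum.distrib)
  also have "\<dots> = F (r 0) + q ^ cyc_minus_fix n r *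
      (\<Sum>k\<in>{1..<n}. insertion_coeff q w (ctype_of r k) * cweight_except w n r k)"
    unfolding F_def by (simp add: cyc_term_insert_next_to sum_distrib_left mult.assoc)
  finally show ?thesis
    using r0 cyc_term_insert_top[OF r assms] cyc_term_insert_after_zero[OF r r0]
    by (simp add: F_def lessThan_Suc_atMost[symmetric] algebra_simps permutes_inverses[OF r])
qed

end

definition cweight_partial :: "(ctype \<Rightarrow> real) \<Rightarrow> nat \<Rightarrow> (nat \<Rightarrow> nat) \<Rightarrow> ctype \<Rightarrow> real" where
  "cweight_partial w n r c = (\<Sum>k\<in>{k \<in> {1..<n}. ctype_of r k = c}. cweight_except w n r k)"

definition cyc_gf :: "real \<Rightarrow> (ctype \<Rightarrow> real) \<Rightarrow> nat \<Rightarrow> real" where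
  "cyc_gf q w n = (\<Sum>r\<in>{r. r permutes {..<n}}. cyc_term q w n r)"

definition cyc_gf_partial :: "real \<Rightarrow> (ctype \<Rightarrow> real) \<Rightarrow> nat \<Rightarrow> ctype \<Rightarrow> real" where
  "cyc_gf_partial q w n c =
    (\<Sum>r\<in>{r. r permutes {..<n}}. q ^ cyc_minus_fix n r * cweight_partial w n r c)"

lemma sum_by_ctype:
  "(\<Sum>k\<in>{1..<n}. f (ctype_of r k) * cweight_except w n r k) =
    f Peak * cweight_partial w n r Peak + f Valley * cweight_partial w n r Valley +
    f DAsc * cweight_partial w n r DAsc + f DDes * cweight_partial w n r DDes +
    f Fixed * cweight_partial w n r Fixed"
proof -
  let ?e = "\<lambda>c k. if ctype_of r k = c then cweight_except w n r k else 0"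
  have "cweight_partial w n r c = (\<Sum>k\<in>{1..<n}. ?e c k)" for c
    unfolding cweight_partial_def by (rule sum.inter_filter) simp
  moreover have "f (ctype_of r k) * cweight_except w n r k =
      f Peak * ?e Peak k + f Valley * ?e Valley k + f DAsc * ?e DAsc k + f DDes * ?e DDes k +
      f Fixed * ?e Fixed k" for k
    by (cases "ctype_of r k") simp_all
  ultimately show ?thesis by (simp add: sum.distrib sum_distrib_left)
qed

lemma cyc_gf_Suc:
  assumes "1 \<le> n"
  shows "cyc_gf q w (Suc n) = (w Fixed + w DDes) * cyc_gf q w n +
    w Peak * (w DAsc + w DDes) * cyc_gf_partial q w n Peak +
    w Peak * w Valley * (cyc_gf_partial q w n DAsc + cyc_gf_partial q w n DDes +
      q * cyc_gf_partial q w n Fixed)"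
proof -
  have "cyc_gf q w (Suc n) =
      (\<Sum>b\<in>insert n {..<n}. \<Sum>r\<in>{r. r permutes {..<n}}. cyc_term q w (Suc n) (transpose n b \<circ> r))"
    unfolding cyc_gf_def lessThan_Suc by (rule sum_over_permutations_insert) auto
  also have "\<dots> = (\<Sum>r\<in>{r. r permutes {..<n}}. \<Sum>b\<in>{..n}. cyc_term q w (Suc n) (transpose n b \<circ> r))"
    by (subst sum.swap) (simp add: lessThan_Suc_atMost[symmetric] lessThan_Suc)
  also have "\<dots> = (\<Sum>r\<in>{r. r permutes {..<n}}. (w Fixed + w DDes) * cyc_term q w n r +
      q ^ cyc_minus_fix n r *
        (\<Sum>k\<in>{1..<n}. insertion_coeff q w (ctype_of r k) * cweight_except w n r k))"
    using assms by (intro sum.cong refl) (simp add: sum_cyc_term_insert)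
  finally show ?thesis
    unfolding sum_by_ctype
    by (simp add: cyc_gf_def cyc_gf_partial_def insertion_coeff_def sum.distrib sum_distrib_left
        algebra_simps)
qed

type_synonym poly3 = "(real \<times> nat \<times> nat \<times> nat) list"

definition poly3_eval :: "poly3 \<Rightarrow> real \<Rightarrow> real \<Rightarrow> real \<Rightarrow> real" where
  "poly3_eval P x y z = (\<Sum>(c, i, j, k) \<leftarrow> P. c * x ^ i * y ^ j * z ^ k)"

definition poly3_dx :: "poly3 \<Rightarrow> poly3" where
  "poly3_dx P = map (\<lambda>(c, i, j, k). (c * real i, i - 1, j, k)) P"

definition poly3_dy :: "poly3 \<Rightarrow> poly3" where
  "poly3_dy P = map (\<lambda>(c, i, j, k). (c * real j, i, j - 1, k)) P"

definition poly3_dz :: "poly3 \<Rightarrow> poly3" where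
  "poly3_dz P = map (\<lambda>(c, i, j, k). (c * real k, i, j, k - 1)) P"

definition poly3_monom_mult :: "real \<Rightarrow> nat \<Rightarrow> nat \<Rightarrow> nat \<Rightarrow> poly3 \<Rightarrow> poly3" where
  "poly3_monom_mult a i' j' k' P = map (\<lambda>(c, i, j, k). (a * c, i + i', j + j', k + k')) P"

lemma poly3_eval_Nil [simp]: "poly3_eval [] x y z = 0"
  by (simp add: poly3_eval_def)

lemma poly3_eval_Cons [simp]:
  "poly3_eval ((c, i, j, k) # P) x y z = c * x ^ i * y ^ j * z ^ k + poly3_eval P x y z"
  by (simp add: poly3_eval_def)

lemma poly3_eval_append [simp]:
  "poly3_eval (P @ Q) x y z = poly3_eval P x y z + poly3_eval Q x y z"
  by (simp add: poly3_eval_def)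

lemma poly3_eval_monom_mult [simp]:
  "poly3_eval (poly3_monom_mult a i j k P) x y z = a * x ^ i * y ^ j * z ^ k * poly3_eval P x y z"
  by (induction P) (auto simp: poly3_monom_mult_def power_add algebra_simps)

lemma poly3_eval_has_derivative_along_line:
  "((\<lambda>s. poly3_eval P (x + a * s) (y + b * s) (z + d * s)) has_real_derivative
     a * poly3_eval (poly3_dx P) x y z + b * poly3_eval (poly3_dy P) x y z +
     d * poly3_eval (poly3_dz P) x y z) (at 0)"
proof (induction P)
  case Nil
  then show ?case by (simp add: poly3_dx_def poly3_dy_def poly3_dz_def)
next
  case (Cons m P)
  obtain c i j k where m: "m = (c, i, j, k)" by (cases m) auto
  have "((\<lambda>s. c * (x + a * s) ^ i * (y + b * s) ^ j * (z + d * s) ^ k) has_real_derivative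
      a * (c * real i * x ^ (i - 1) * y ^ j * z ^ k) +
      b * (c * real j * x ^ i * y ^ (j - 1) * z ^ k) +
      d * (c * real k * x ^ i * y ^ j * z ^ (k - 1))) (at 0)"
    by (auto intro!: derivative_eq_intros simp: algebra_simps)
  from DERIV_add[OF this Cons.IH] show ?case
    by (simp add: m poly3_dx_def poly3_dy_def poly3_dz_def algebra_simps)
qed

lemma cweight_has_derivative:
  "((\<lambda>s. cweight (w(c := w c + s)) n r) has_real_derivative cweight_partial w n r c) (at 0)"
proof -
  define f where "f k = (\<lambda>s. (w(c := w c + s)) (ctype_of r k))" for k
  have "(f k has_real_derivative (if ctype_of r k = c then 1 else 0)) (at 0)" for k
    by (cases "ctype_of r k = c") (auto simp: f_def intro!: derivative_eq_intros)
  then have "((\<lambda>s. \<Prod>k\<in>{1..<n}. f k s) has_real_derivative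
      (\<Sum>k\<in>{1..<n}. (if ctype_of r k = c then 1 else 0) * (\<Prod>i\<in>{1..<n} - {k}. f i 0))) (at 0)"
    by (rule has_field_derivative_prod)
  moreover have "f i 0 = w (ctype_of r i)" for i by (simp add: f_def)
  then have "(\<Sum>k\<in>{1..<n}. (if ctype_of r k = c then 1 else 0) * (\<Prod>i\<in>{1..<n} - {k}. f i 0)) =
      cweight_partial w n r c"
    unfolding cweight_partial_def cweight_except_def
    by (subst sum.inter_filter) (auto intro: sum.cong)
  ultimately show ?thesis by (simp add: cweight_def f_def)
qed

lemma cyc_gf_has_derivative:
  "((\<lambda>s. cyc_gf q (w(c := w c + s)) n) has_real_derivative cyc_gf_partial q w n c) (at 0)"
  unfolding cyc_gf_def cyc_gf_partial_def cyc_term_def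
  by (intro DERIV_sum DERIV_cmult cweight_has_derivative)

lemma cyc_gf_partial_eq_poly3:
  assumes "\<And>s. cyc_gf q (w(c := w c + s)) n = poly3_eval P (x + a * s) (y + b * s) (z + d * s)"
  shows "cyc_gf_partial q w n c = a * poly3_eval (poly3_dx P) x y z +
    b * poly3_eval (poly3_dy P) x y z + d * poly3_eval (poly3_dz P) x y z"
  using cyc_gf_has_derivative[of q w c n] poly3_eval_has_derivative_along_line[of P x a y b z d]
  unfolding assms by (rule DERIV_unique)

lemma cyc_gf_1: "cyc_gf q w 1 = q"
proof -
  have "{r. r permutes {..<1::nat}} = {id}" by (auto simp: lessThan_Suc)
  moreover have "cyc_minus_fix 1 id = 1"
    by (simp add: cyc_minus_fix_def num_cycles_def lessThan_Suc)
  ultimately show ?thesis by (simp add: cyc_gf_def cyc_term_def cweight_def)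
qed

lemma cyc_gf_Suc_poly3:
  fixes P :: poly3
  defines "x w \<equiv> w Peak * w Valley" and "y w \<equiv> w DAsc + w DDes" and "z w \<equiv> w DDes + w Fixed"
  assumes "1 \<le> n" and IH: "\<And>w. cyc_gf q w n = poly3_eval P (x w) (y w) (z w)"
  shows "cyc_gf q w (Suc n) = poly3_eval
    (poly3_monom_mult 1 0 0 1 P @ poly3_monom_mult 1 1 1 0 (poly3_dx P) @
     poly3_monom_mult 2 1 0 0 (poly3_dy P) @ poly3_monom_mult (1 + q) 1 0 0 (poly3_dz P))
    (x w) (y w) (z w)"
proof -
  have "cyc_gf_partial q w n Peak = w Valley * poly3_eval (poly3_dx P) (x w) (y w) (z w)"
    by (subst cyc_gf_partial_eq_poly3[where P = P and x = "x w" and y = "y w" and z = "z w"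
        and a = "w Valley" and b = 0 and d = 0])
      (simp_all add: IH x_def y_def z_def algebra_simps)
  moreover have "cyc_gf_partial q w n DAsc = poly3_eval (poly3_dy P) (x w) (y w) (z w)"
    by (subst cyc_gf_partial_eq_poly3[where P = P and x = "x w" and y = "y w" and z = "z w"
        and a = 0 and b = 1 and d = 0])
      (simp_all add: IH x_def y_def z_def algebra_simps)
  moreover have "cyc_gf_partial q w n DDes =
      poly3_eval (poly3_dy P) (x w) (y w) (z w) + poly3_eval (poly3_dz P) (x w) (y w) (z w)"
    by (subst cyc_gf_partial_eq_poly3[where P = P and x = "x w" and y = "y w" and z = "z w"
        and a = 0 and b = 1 and d = 1])
      (simp_all add: IH x_def y_def z_def algebra_simps)
  moreover have "cyc_gf_partial q w n Fixed = poly3_eval (poly3_dz P) (x w) (y w) (z w)"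
    by (subst cyc_gf_partial_eq_poly3[where P = P and x = "x w" and y = "y w" and z = "z w"
        and a = 0 and b = 0 and d = 1])
      (simp_all add: IH x_def y_def z_def algebra_simps)
  ultimately show ?thesis
    by (simp add: cyc_gf_Suc[OF \<open>1 \<le> n\<close>] IH x_def y_def z_def algebra_simps)
qed

lemma cyc_gf_poly3:
  assumes "1 \<le> n"
  shows "\<exists>P. \<forall>w. cyc_gf q w n =
    poly3_eval P (w Peak * w Valley) (w DAsc + w DDes) (w DDes + w Fixed)"
  using assms
proof (induction n rule: dec_induct)
  case base
  show ?case by (rule exI[of _ "[(q, 0, 0, 0)]"]) (simp add: cyc_gf_1[unfolded One_nat_def])
next
  case (step n)
  then obtain P where
    "\<forall>w. cyc_gf q w n = poly3_eval P (w Peak * w Valley) (w DAsc + w DDes) (w DDes + w Fixed)"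
    by blast
  with cyc_gf_Suc_poly3[OF step(1)] show ?case by blast
qed

lemma cyc_gf_cong:
  assumes "1 \<le> n" and "w Peak * w Valley = w' Peak * w' Valley"
    and "w DAsc + w DDes = w' DAsc + w' DDes" and "w DDes + w Fixed = w' DDes + w' Fixed"
  shows "cyc_gf q w n = cyc_gf q w' n"
  using cyc_gf_poly3[OF assms(1), of q] assms(2-4) by auto

lemma cyc_gf_scale: "cyc_gf q (\<lambda>c. a * w c) n = a ^ (n - 1) * cyc_gf q w n"
  by (simp add: cyc_gf_def cyc_term_def cweight_def prod.distrib sum_distrib_left algebra_simps)

text \<open>\<open>\<sigma>\<^sup>*\<close> with \<open>n\<close> cut out of its cycle: \<open>0\<close> is sent to \<open>\<sigma>\<^sup>*(n)\<close> instead of \<open>n\<close>.\<close>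
definition reduced_star :: "nat \<Rightarrow> (nat \<Rightarrow> nat) \<Rightarrow> nat \<Rightarrow> nat" where
  "reduced_star n \<sigma> i = (if i = 0 then \<sigma> n - 1 else if i < n then \<sigma> i - 1 else i)"

definition cpk_exc_weight :: "real \<Rightarrow> real \<Rightarrow> ctype \<Rightarrow> real" where
  "cpk_exc_weight x t c = (case c of Peak \<Rightarrow> x | DDes \<Rightarrow> 1 | _ \<Rightarrow> t)"

context
  fixes n :: nat and \<sigma> :: "nat \<Rightarrow> nat"
  assumes \<sigma>: "\<sigma> permutes {1..n}" and n: "1 \<le> n"
begin

lemma perm_value_eq_reduced_star:
  assumes "i \<in> {1..n}"
  shows "\<sigma> i = reduced_star n \<sigma> (if i = n then 0 else i) + 1"
  using assms permutes_in_image[OF \<sigma>, of i] by (auto simp: reduced_star_def)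

lemma reduced_star_permutes: "reduced_star n \<sigma> permutes {..<n}"
proof (rule bij_imp_permutes)
  have "bij_betw (\<lambda>i. if i = 0 then n else i) {..<n} {1..n}"
    by (rule bij_betw_byWitness[where f' = "\<lambda>j. if j = n then 0 else j"]) (use n in auto)
  moreover have "bij_betw (\<lambda>j. j - 1) {1..n} {..<n}"
    by (rule bij_betw_byWitness[where f' = Suc]) auto
  ultimately have "bij_betw ((\<lambda>j. j - 1) \<circ> \<sigma> \<circ> (\<lambda>i. if i = 0 then n else i)) {..<n} {..<n}"
    using permutes_imp_bij[OF \<sigma>] by (auto intro: bij_betw_trans)
  then show "bij_betw (reduced_star n \<sigma>) {..<n} {..<n}"
    by (rule bij_betw_cong[THEN iffD1, rotated]) (use n in \<open>auto simp: reduced_star_def\<close>)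
next
  fix i assume "i \<notin> {..<n}"
  then show "reduced_star n \<sigma> i = i" using n by (simp add: reduced_star_def)
qed

lemma star_eq_transpose_reduced_star:
  "star n \<sigma> = transpose n (reduced_star n \<sigma> 0) \<circ> reduced_star n \<sigma>"
proof
  fix i
  have "inv (reduced_star n \<sigma>) (reduced_star n \<sigma> 0) = 0"
    by (simp add: permutes_inverses[OF reduced_star_permutes])
  moreover have "reduced_star n \<sigma> 0 \<in> {..<n}"
    using permutes_in_image[OF reduced_star_permutes] n by simp
  ultimately show "star n \<sigma> i = (transpose n (reduced_star n \<sigma> 0) \<circ> reduced_star n \<sigma>) i"
    using n by (subst transpose_comp_apply[OF reduced_star_permutes])
      (auto simp: star_def reduced_star_def)
qed

lemma cyc_star_minus_fix_star: "cyc_star n \<sigma> - fix_star n \<sigma> = cyc_minus_fix n (reduced_star n \<sigma>)"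
proof -
  have "cyc_star n \<sigma> = num_cycles (reduced_star n \<sigma>) {..<n}"
    using num_cycles_insert_transpose[OF reduced_star_permutes finite_lessThan, of n]
      permutes_in_image[OF reduced_star_permutes] n
    by (simp add: cyc_star_def star_eq_transpose_reduced_star atLeast0AtMost lessThan_Suc
        lessThan_Suc_atMost[symmetric])
  moreover have "{i \<in> {1..n-1}. star n \<sigma> i = i} = {i \<in> {1..<n}. reduced_star n \<sigma> i = i}"
    using n by (auto simp: star_def reduced_star_def)
  ultimately show ?thesis by (simp add: fix_star_def cyc_minus_fix_def)
qed

lemma exc_eq_card_ctype:
  "exc n \<sigma> = card {i \<in> {1..<n}. ctype_of (reduced_star n \<sigma>) i \<in> {Valley, DAsc, Fixed}}"
proof -
  have "\<sigma> i > i \<longleftrightarrow> i < n \<and> reduced_star n \<sigma> i \<ge> i" if "i \<in> {1..n}" for i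
  proof (cases "i = n")
    case True
    then show ?thesis using permutes_in_image[OF \<sigma>, of n] n by simp
  next
    case False
    then show ?thesis using that perm_value_eq_reduced_star[OF that] by auto
  qed
  then have "{i \<in> {1..n}. \<sigma> i > i} = {i \<in> {1..<n}. reduced_star n \<sigma> i \<ge> i}" by auto
  moreover have
    "reduced_star n \<sigma> i \<ge> i \<longleftrightarrow> ctype_of (reduced_star n \<sigma>) i \<in> {Valley, DAsc, Fixed}" for i
    by (auto simp: ctype_of_def)
  ultimately show ?thesis by (simp add: exc_def)
qed

lemma cpk_star_eq_card_ctype:
  "cpk_star n \<sigma> = card {i \<in> {1..<n}. ctype_of (reduced_star n \<sigma>) i = Peak}"
proof -
  let ?r = "reduced_star n \<sigma>"
  have "inv (star n \<sigma>) i < i \<and> i > star n \<sigma> i \<longleftrightarrow> ctype_of ?r i = Peak" if "i \<in> {1..<n}" for i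
  proof -
    have "inv (star n \<sigma>) i = (if i = ?r 0 then n else inv ?r i)"
      unfolding star_eq_transpose_reduced_star
      using that inv_transpose_insert_apply[OF reduced_star_permutes, of "?r 0" i]
        permutes_in_image[OF reduced_star_permutes, of 0]
        permutes_inverses[OF reduced_star_permutes] n
      by auto
    moreover have "star n \<sigma> i = ?r i" using that by (simp add: star_def reduced_star_def)
    moreover have "inv ?r i = 0 \<longleftrightarrow> i = ?r 0" by (metis permutes_inv_eq[OF reduced_star_permutes])
    ultimately show ?thesis using that by (auto simp: ctype_of_def)
  qed
  moreover have "{1..n-1} = {1..<n}" using n by auto
  ultimately have "{i \<in> {1..n-1}. inv (star n \<sigma>) i < i \<and> i > star n \<sigma> i} =
      {i \<in> {1..<n}. ctype_of ?r i = Peak}"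
    by blast
  then show ?thesis by (simp only: cpk_star_def)
qed

end

lemma bij_betw_reduced_star:
  assumes "1 \<le> n"
  shows "bij_betw (reduced_star n) (perms n) {r. r permutes {..<n}}"
proof -
  have "inj_on (reduced_star n) (perms n)"
  proof (rule inj_onI)
    fix \<sigma> \<tau> assume "\<sigma> \<in> perms n" "\<tau> \<in> perms n" and eq: "reduced_star n \<sigma> = reduced_star n \<tau>"
    then have \<sigma>: "\<sigma> permutes {1..n}" and \<tau>: "\<tau> permutes {1..n}" by (simp_all add: perms_def)
    show "\<sigma> = \<tau>"
    proof
      fix i
      show "\<sigma> i = \<tau> i"
        using perm_value_eq_reduced_star[OF \<sigma> assms] perm_value_eq_reduced_star[OF \<tau> assms] eq
          permutes_not_in[OF \<sigma>] permutes_not_in[OF \<tau>]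
        by (cases "i \<in> {1..n}") auto
    qed
  qed
  moreover have "reduced_star n ` perms n \<subseteq> {r. r permutes {..<n}}"
    using reduced_star_permutes assms by (auto simp: perms_def)
  moreover have "card (perms n) = card {r. r permutes {..<n::nat}}"
    by (simp add: perms_def card_permutations)
  ultimately show ?thesis
    by (simp add: bij_betw_def card_image card_subset_eq finite_permutations)
qed

lemma P_poly_eq_cyc_gf:
  assumes "1 \<le> n"
  shows "P_poly n q x t = cyc_gf q (cpk_exc_weight x t) n"
proof -
  have pow_card: "c ^ card {i \<in> {1..<n}. P i} = (\<Prod>i\<in>{1..<n}. if P i then c else 1)"
    for c :: real and P
    by (simp add: prod.inter_filter[symmetric])
  have weight:
    "cpk_exc_weight x t c = (if c = Peak then x else 1) * (if c \<in> {Valley, DAsc, Fixed} then t else 1)"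
    for c by (cases c) (simp_all add: cpk_exc_weight_def)
  have "x ^ cpk_star n \<sigma> * t ^ exc n \<sigma> = cweight (cpk_exc_weight x t) n (reduced_star n \<sigma>)"
    if "\<sigma> \<in> perms n" for \<sigma>
  proof -
    have \<sigma>: "\<sigma> permutes {1..n}" using that by (simp add: perms_def)
    show ?thesis
      unfolding exc_eq_card_ctype[OF \<sigma> assms] cpk_star_eq_card_ctype[OF \<sigma> assms] pow_card
        cweight_def weight prod.distrib
      by (rule refl)
  qed
  then have "P_poly n q x t = (\<Sum>\<sigma>\<in>perms n. cyc_term q (cpk_exc_weight x t) n (reduced_star n \<sigma>))"
    unfolding P_poly_def cyc_term_def using assms
    by (intro sum.cong refl) (simp add: perms_def cyc_star_minus_fix_star mult.assoc)
  also have "\<dots> = cyc_gf q (cpk_exc_weight x t) n"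
    unfolding cyc_gf_def by (rule sum.reindex_bij_betw[OF bij_betw_reduced_star[OF assms]])
  finally show ?thesis .
qed

lemma A_poly_eq_P_poly_1: "A_poly n q t = P_poly n q 1 t"
  unfolding A_poly_def P_poly_def by (simp only: power_one mult_1_right)

theorem theorem3p5:
  fixes n :: nat and q t x :: real
  assumes "n \<ge> 1"
    and "1 + x \<noteq> 0" and "x + t \<noteq> 0" and "1 + x * t \<noteq> 0"
  shows "A_poly n q t =
    ((1 + x * t) / (1 + x)) ^ (n - 1) *
    P_poly n q ((1 + x)^2 * t / ((x + t) * (1 + x * t))) ((x + t) / (1 + x * t))"
proof -
  define c where "c = (1 + x) / (1 + x * t)"
  define y where "y = (1 + x)^2 * t / ((x + t) * (1 + x * t))"
  define s where "s = (x + t) / (1 + x * t)"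
  have "y * s = c * (c * t)"
    using assms(3,4) by (simp add: c_def y_def s_def power2_eq_square)
  moreover have "s + 1 = c * t + c"
    using assms(4) by (simp add: c_def s_def divide_simps) (simp add: algebra_simps)
  ultimately have "cyc_gf q (cpk_exc_weight y s) n = cyc_gf q (\<lambda>k. c * cpk_exc_weight 1 t k) n"
    using assms(1) by (intro cyc_gf_cong) (simp_all add: cpk_exc_weight_def algebra_simps)
  then have "P_poly n q y s = c ^ (n - 1) * A_poly n q t"
    using assms(1) by (simp add: P_poly_eq_cyc_gf A_poly_eq_P_poly_1 cyc_gf_scale)
  moreover have "(1 + x * t) / (1 + x) = inverse c" by (simp add: c_def)
  ultimately have "((1 + x * t) / (1 + x)) ^ (n - 1) * P_poly n q y s =
      (inverse c * c) ^ (n - 1) * A_poly n q t"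
    by (simp add: power_mult_distrib)
  moreover have "c \<noteq> 0" using assms(2,4) by (simp add: c_def)
  ultimately show ?thesis by (simp add: y_def s_def)
qed

end
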